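(* Let $f:X\to Y$ be a map of algebraic Kan complexes. Then $f$ sends thin simplices to thin simplices. In particular, if $\alpha$ and $\beta$ are co-thin simplices of $X$, then $f\alpha$ and $f\beta$ are co-thin simplices of $Y$.
   Context: An algebraic Kan complex is a simplicial set $X$ together with a function $\text{fill}_X$ assigning to every horn $h:\Lambda^n_k\to X$ a chosen filler $\text{fill}_X(h):\Delta^n\to X$ extending $h$ (a "distinguished filler"); a map of algebraic Kan complexes is a simplicial map $f$ with $f(\text{fill}_X(h))=\text{fill}_Y(f\circ h)$ for all horns $h$. A simplex of an algebraic Kan complex is called thin, inductively, if it is degenerate, or is a distinguished filler, or is a composition of thin simplices (i.e. it is the $k$-th face of the distinguished filler of a horn $\Lambda^n_k\to X$ all of whose faces are thin). Two thin simplices $\alpha,\beta:\Delta^n\to X$ are co-thin if there is a horn $\Lambda^n_k\to X$ of which both are extensions (they agree on some $\Lambda^n_k$). *)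

theory Defs
  imports Main
begin

text \<open>Simplicial sets, presented by their graded sets of simplices together with
face and degeneracy operators.  simp X n is the set X_n of n-simplices;
face X n i : X_n -> X_(n-1) is d_i (for n >= 1, i <= n);
degen X n i : X_n -> X_(n+1) is s_i (for i <= n).\<close>

record 'a sset =
  simp  :: "nat \<Rightarrow> 'a set"
  face  :: "nat \<Rightarrow> nat \<Rightarrow> 'a \<Rightarrow> 'a"
  degen :: "nat \<Rightarrow> nat \<Rightarrow> 'a \<Rightarrow> 'a"

definition simplicial_set :: "'a sset \<Rightarrow> bool" where
  "simplicial_set X \<longleftrightarrow>
     (\<forall>n i x. 1 \<le> n \<and> i \<le> n \<and> x \<in> simp X n \<longrightarrow> face X n i x \<in> simp X (n - 1)) \<and>
     (\<forall>n i x. i \<le> n \<and> x \<in> simp X n \<longrightarrow> degen X n i x \<in> simp X (Suc n)) \<and>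
     \<comment> \<open>d_i d_j = d_(j-1) d_i for i < j\<close>
     (\<forall>n i j x. 2 \<le> n \<and> i < j \<and> j \<le> n \<and> x \<in> simp X n \<longrightarrow>
        face X (n - 1) i (face X n j x) = face X (n - 1) (j - 1) (face X n i x)) \<and>
     \<comment> \<open>d_i s_j = s_(j-1) d_i for i < j\<close>
     (\<forall>n i j x. i < j \<and> j \<le> n \<and> x \<in> simp X n \<longrightarrow>
        face X (Suc n) i (degen X n j x) = degen X (n - 1) (j - 1) (face X n i x)) \<and>
     \<comment> \<open>d_j s_j = d_(j+1) s_j = id\<close>
     (\<forall>n j x. j \<le> n \<and> x \<in> simp X n \<longrightarrow>
        face X (Suc n) j (degen X n j x) = x \<and> face X (Suc n) (Suc j) (degen X n j x) = x) \<and>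
     \<comment> \<open>d_i s_j = s_j d_(i-1) for i > j + 1\<close>
     (\<forall>n i j x. Suc j < i \<and> i \<le> Suc n \<and> x \<in> simp X n \<longrightarrow>
        face X (Suc n) i (degen X n j x) = degen X (n - 1) j (face X n (i - 1) x)) \<and>
     \<comment> \<open>s_i s_j = s_(j+1) s_i for i <= j\<close>
     (\<forall>n i j x. i \<le> j \<and> j \<le> n \<and> x \<in> simp X n \<longrightarrow>
        degen X (Suc n) i (degen X n j x) = degen X (Suc n) (Suc j) (degen X n i x))"

text \<open>A horn h : Lambda^n_k -> X (n >= 1, k <= n) is, by the Yoneda lemma, the same as a
compatible family of (n-1)-simplices h i (i <= n, i \<noteq> k), with d_i (h j) = d_(j-1) (h i)
for i < j.  We normalise the representing function to be undefined outside the
relevant indices, so that each horn has a unique representative.\<close>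

definition horn :: "'a sset \<Rightarrow> nat \<Rightarrow> nat \<Rightarrow> (nat \<Rightarrow> 'a) \<Rightarrow> bool" where
  "horn X n k h \<longleftrightarrow> 1 \<le> n \<and> k \<le> n \<and>
     (\<forall>i. i \<le> n \<and> i \<noteq> k \<longrightarrow> h i \<in> simp X (n - 1)) \<and>
     (\<forall>i j. i < j \<and> j \<le> n \<and> i \<noteq> k \<and> j \<noteq> k \<longrightarrow>
        face X (n - 1) i (h j) = face X (n - 1) (j - 1) (h i)) \<and>
     (\<forall>i. (n < i \<or> i = k) \<longrightarrow> h i = undefined)"

definition extends_horn :: "'a sset \<Rightarrow> nat \<Rightarrow> nat \<Rightarrow> (nat \<Rightarrow> 'a) \<Rightarrow> 'a \<Rightarrow> bool" where
  "extends_horn X n k h x \<longleftrightarrow> x \<in> simp X n \<and> (\<forall>i. i \<le> n \<and> i \<noteq> k \<longrightarrow> face X n i x = h i)"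

definition alg_kan :: "'a sset \<Rightarrow> (nat \<Rightarrow> nat \<Rightarrow> (nat \<Rightarrow> 'a) \<Rightarrow> 'a) \<Rightarrow> bool" where
  "alg_kan X fill \<longleftrightarrow> simplicial_set X \<and>
     (\<forall>n k h. horn X n k h \<longrightarrow> extends_horn X n k h (fill n k h))"

definition horn_comp :: "(nat \<Rightarrow> 'a \<Rightarrow> 'b) \<Rightarrow> nat \<Rightarrow> nat \<Rightarrow> (nat \<Rightarrow> 'a) \<Rightarrow> (nat \<Rightarrow> 'b)" where
  "horn_comp f n k h = (\<lambda>i. if i \<le> n \<and> i \<noteq> k then f (n - 1) (h i) else undefined)"

definition simplicial_map :: "'a sset \<Rightarrow> 'b sset \<Rightarrow> (nat \<Rightarrow> 'a \<Rightarrow> 'b) \<Rightarrow> bool" where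
  "simplicial_map X Y f \<longleftrightarrow>
     (\<forall>n x. x \<in> simp X n \<longrightarrow> f n x \<in> simp Y n) \<and>
     (\<forall>n i x. 1 \<le> n \<and> i \<le> n \<and> x \<in> simp X n \<longrightarrow> f (n - 1) (face X n i x) = face Y n i (f n x)) \<and>
     (\<forall>n i x. i \<le> n \<and> x \<in> simp X n \<longrightarrow> f (Suc n) (degen X n i x) = degen Y n i (f n x))"

definition alg_kan_map ::
  "'a sset \<Rightarrow> (nat \<Rightarrow> nat \<Rightarrow> (nat \<Rightarrow> 'a) \<Rightarrow> 'a) \<Rightarrow> 'b sset \<Rightarrow> (nat \<Rightarrow> nat \<Rightarrow> (nat \<Rightarrow> 'b) \<Rightarrow> 'b)
   \<Rightarrow> (nat \<Rightarrow> 'a \<Rightarrow> 'b) \<Rightarrow> bool" where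
  "alg_kan_map X fillX Y fillY f \<longleftrightarrow> simplicial_map X Y f \<and>
     (\<forall>n k h. horn X n k h \<longrightarrow> f n (fillX n k h) = fillY n k (horn_comp f n k h))"

inductive thin :: "'a sset \<Rightarrow> (nat \<Rightarrow> nat \<Rightarrow> (nat \<Rightarrow> 'a) \<Rightarrow> 'a) \<Rightarrow> nat \<Rightarrow> 'a \<Rightarrow> bool"
  for X fill where
  degenerate: "\<lbrakk> y \<in> simp X n; i \<le> n \<rbrakk> \<Longrightarrow> thin X fill (Suc n) (degen X n i y)"
| filler: "horn X n k h \<Longrightarrow> thin X fill n (fill n k h)"
| composite: "\<lbrakk> horn X n k h; \<forall>i. i \<le> n \<and> i \<noteq> k \<longrightarrow> thin X fill (n - 1) (h i) \<rbrakk>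
     \<Longrightarrow> thin X fill (n - 1) (face X n k (fill n k h))"

definition cothin :: "'a sset \<Rightarrow> (nat \<Rightarrow> nat \<Rightarrow> (nat \<Rightarrow> 'a) \<Rightarrow> 'a) \<Rightarrow> nat \<Rightarrow> 'a \<Rightarrow> 'a \<Rightarrow> bool" where
  "cothin X fill n a b \<longleftrightarrow> thin X fill n a \<and> thin X fill n b \<and>
     (\<exists>k h. horn X n k h \<and> extends_horn X n k h a \<and> extends_horn X n k h b)"

end

theory Submission
  imports Defs
begin

text \<open>Thinness is generated inductively by degeneracies, distinguished fillers and their
composites, and a map of algebraic Kan complexes commutes with faces, degeneracies and
distinguished fillers while sending horns to horns; so rule induction on thinness carries each
generating clause of X to the same clause of Y. Co-thinness follows because the image of a
common horn is a common horn of the images. Neither argument uses that Y is an algebraic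
Kan complex.\<close>

lemma simplicial_map_simp:
  "simplicial_map X Y f \<Longrightarrow> x \<in> simp X n \<Longrightarrow> f n x \<in> simp Y n"
  by (simp add: simplicial_map_def)

lemma simplicial_map_face:
  "simplicial_map X Y f \<Longrightarrow> 1 \<le> n \<Longrightarrow> i \<le> n \<Longrightarrow> x \<in> simp X n \<Longrightarrow>
    f (n - 1) (face X n i x) = face Y n i (f n x)"
  by (simp add: simplicial_map_def)

lemma simplicial_map_degen:
  "simplicial_map X Y f \<Longrightarrow> i \<le> n \<Longrightarrow> x \<in> simp X n \<Longrightarrow>
    f (Suc n) (degen X n i x) = degen Y n i (f n x)"
  by (simp add: simplicial_map_def)

lemma horn_comp_apply:
  "i \<le> n \<Longrightarrow> i \<noteq> k \<Longrightarrow> horn_comp f n k h i = f (n - 1) (h i)"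
  by (simp add: horn_comp_def)

lemma horn_horn_comp:
  assumes f: "simplicial_map X Y f" and h: "horn X n k h"
  shows "horn Y n k (horn_comp f n k h)"
proof -
  have "face Y (n - 1) i (horn_comp f n k h j) = face Y (n - 1) (j - 1) (horn_comp f n k h i)"
    if "i < j" "j \<le> n" "i \<noteq> k" "j \<noteq> k" for i j
  proof -
    have n: "1 \<le> n - 1" using h that by (auto simp: horn_def)
    have simps: "h i \<in> simp X (n - 1)" "h j \<in> simp X (n - 1)"
      using h that by (auto simp: horn_def)
    have "face Y (n - 1) i (horn_comp f n k h j) = f (n - 1 - 1) (face X (n - 1) i (h j))"
      using that simps(2) simplicial_map_face[OF f n] by (simp add: horn_comp_apply)
    also have "\<dots> = f (n - 1 - 1) (face X (n - 1) (j - 1) (h i))"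
      using h that by (simp add: horn_def)
    also have "\<dots> = face Y (n - 1) (j - 1) (horn_comp f n k h i)"
      using that simps(1) simplicial_map_face[OF f n] by (simp add: horn_comp_apply)
    finally show ?thesis .
  qed
  then show ?thesis
    using h simplicial_map_simp[OF f] by (auto simp: horn_def horn_comp_def)
qed

lemma extends_horn_horn_comp:
  assumes f: "simplicial_map X Y f" and h: "horn X n k h" and x: "extends_horn X n k h x"
  shows "extends_horn Y n k (horn_comp f n k h) (f n x)"
proof -
  have n: "1 \<le> n" using h by (simp add: horn_def)
  have "face Y n i (f n x) = horn_comp f n k h i" if "i \<le> n" "i \<noteq> k" for i
    using x that by (simp add: extends_horn_def horn_comp_apply simplicial_map_face[OF f n, symmetric])
  then show ?thesis
    using x simplicial_map_simp[OF f] by (simp add: extends_horn_def)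
qed

lemma alg_kan_map_simplicial_map:
  "alg_kan_map X fillX Y fillY f \<Longrightarrow> simplicial_map X Y f"
  by (simp add: alg_kan_map_def)

lemma alg_kan_map_fill:
  "alg_kan_map X fillX Y fillY f \<Longrightarrow> horn X n k h \<Longrightarrow>
    f n (fillX n k h) = fillY n k (horn_comp f n k h)"
  by (simp add: alg_kan_map_def)

lemma alg_kan_map_composite:
  assumes X: "alg_kan X fillX" and f: "alg_kan_map X fillX Y fillY f" and h: "horn X n k h"
  shows "f (n - 1) (face X n k (fillX n k h)) = face Y n k (fillY n k (horn_comp f n k h))"
proof -
  have n: "1 \<le> n" "k \<le> n" using h by (auto simp: horn_def)
  have "fillX n k h \<in> simp X n"
    using X h by (simp add: alg_kan_def extends_horn_def)
  then have "f (n - 1) (face X n k (fillX n k h)) = face Y n k (f n (fillX n k h))"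
    using n by (intro simplicial_map_face[OF alg_kan_map_simplicial_map[OF f]])
  also have "\<dots> = face Y n k (fillY n k (horn_comp f n k h))"
    using alg_kan_map_fill[OF f h] by simp
  finally show ?thesis .
qed

lemma alg_kan_map_thin:
  assumes X: "alg_kan X fillX" and f: "alg_kan_map X fillX Y fillY f"
    and x: "thin X fillX n x"
  shows "thin Y fillY n (f n x)"
proof -
  note sm = alg_kan_map_simplicial_map[OF f]
  show ?thesis
    using x
  proof (induction rule: thin.induct)
    case (degenerate y n i)
    then show ?case
      by (simp add: simplicial_map_degen[OF sm] simplicial_map_simp[OF sm] thin.degenerate)
  next
    case (filler n k h)
    then show ?case
      using alg_kan_map_fill[OF f] horn_horn_comp[OF sm] by (simp add: thin.filler)
  next
    case (composite n k h)
    have "thin Y fillY (n - 1) (face Y n k (fillY n k (horn_comp f n k h)))"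
      using composite.IH by (intro thin.composite[OF horn_horn_comp[OF sm composite.hyps]])
        (simp add: horn_comp_apply)
    then show ?case
      unfolding alg_kan_map_composite[OF X f composite.hyps] .
  qed
qed

lemma alg_kan_map_cothin:
  assumes X: "alg_kan X fillX" and f: "alg_kan_map X fillX Y fillY f"
    and ab: "cothin X fillX n a b"
  shows "cothin Y fillY n (f n a) (f n b)"
proof -
  note sm = alg_kan_map_simplicial_map[OF f]
  obtain k h where "horn X n k h" "extends_horn X n k h a" "extends_horn X n k h b"
    using ab by (auto simp: cothin_def)
  then show ?thesis
    using ab alg_kan_map_thin[OF X f] horn_horn_comp[OF sm] extends_horn_horn_comp[OF sm]
    by (meson cothin_def)
qed

theorem mainTheorem6:
  fixes X :: "'a sset" and Y :: "'b sset"
    and fillX :: "nat \<Rightarrow> nat \<Rightarrow> (nat \<Rightarrow> 'a) \<Rightarrow> 'a"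
    and fillY :: "nat \<Rightarrow> nat \<Rightarrow> (nat \<Rightarrow> 'b) \<Rightarrow> 'b"
    and f :: "nat \<Rightarrow> 'a \<Rightarrow> 'b"
  assumes "alg_kan X fillX" and "alg_kan Y fillY"
    and "alg_kan_map X fillX Y fillY f"
  shows "(\<forall>n x. thin X fillX n x \<longrightarrow> thin Y fillY n (f n x)) \<and>
         (\<forall>n a b. cothin X fillX n a b \<longrightarrow> cothin Y fillY n (f n a) (f n b))"
  using alg_kan_map_thin[OF assms(1,3)] alg_kan_map_cothin[OF assms(1,3)] by blast

end
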